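(* Let $\rho\in[0,1]$ and define $\gamma_k(1)$, $\Gamma_k(1,\rho)$ as in the context. (a) If $\alpha_k=2/(k+1)$, $k=1,2,\ldots$, then $\alpha_k\in(0,1]$, $\alpha_1=1$, and $\gamma_k(1)\|\Gamma_k(1,\rho)\|_{\frac{2}{1-\rho}}\le ck^{-\frac{1+3\rho}{2}}$ for all $k\ge1$ with $c=2^{1+\rho}3^{-\frac{1-\rho}{2}}$. (b) If $\alpha_k$ are defined recursively by $\alpha_1=\gamma_1=1$, $\gamma_k=\alpha_k^2=(1-\alpha_k)\gamma_{k-1}$ for $k\ge2$ (with $\alpha_k>0$), then $\alpha_k\in(0,1]$ for all $k\ge1$, and the condition of (a) ($\alpha_1=1$ and $\gamma_k(1)\|\Gamma_k(1,\rho)\|_{\frac{2}{1-\rho}}\le ck^{-\frac{1+3\rho}{2}}$ for all $k$) holds with $c=\frac{4}{3^{(1-\rho)/2}}$.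
   Context: For $\alpha_k\in(0,1]$: $\gamma_1(1)=1$, $\gamma_k(1)=(1-\alpha_k)\gamma_{k-1}(1)$ for $k\ge2$; $\Gamma_k(1,\rho)=(\gamma_1(1)^{-1}\alpha_1^{1+\rho},\ldots,\gamma_k(1)^{-1}\alpha_k^{1+\rho})\in\mathbb{R}^k$; $\|\cdot\|_p$ is the $\ell_p$ norm, with $\frac{2}{1-\rho}=\infty$ when $\rho=1$. *)

theory Defs
  imports "HOL-Analysis.Analysis"
begin

text \<open>gamma_k(1): gam a 1 = 1, gam a k = (1 - a k) * gam a (k-1) for k >= 2.
  The value at index 0 is an irrelevant convention.\<close>
fun gam :: "(nat \<Rightarrow> real) \<Rightarrow> nat \<Rightarrow> real" where
  "gam a 0 = 1"
| "gam a (Suc 0) = 1"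
| "gam a (Suc (Suc n)) = (1 - a (Suc (Suc n))) * gam a (Suc n)"

definition Gam_entry :: "(nat \<Rightarrow> real) \<Rightarrow> real \<Rightarrow> nat \<Rightarrow> real" where
  "Gam_entry a \<rho> i = a i powr (1 + \<rho>) / gam a i"

definition lp_norm :: "ereal \<Rightarrow> (nat \<Rightarrow> real) \<Rightarrow> nat \<Rightarrow> real" where
  "lp_norm p x k =
     (if p = \<infinity> then Max ((\<lambda>i. \<bar>x i\<bar>) ` {1..k})
      else (\<Sum>i=1..k. \<bar>x i\<bar> powr real_of_ereal p) powr (1 / real_of_ereal p))"

definition expo :: "real \<Rightarrow> ereal" where
  "expo \<rho> = (if \<rho> = 1 then \<infinity> else ereal (2 / (1 - \<rho>)))"

definition rate_cond :: "(nat \<Rightarrow> real) \<Rightarrow> real \<Rightarrow> real \<Rightarrow> bool" where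
  "rate_cond a \<rho> c \<longleftrightarrow> a 1 = 1 \<and>
     (\<forall>k\<ge>1. gam a k * lp_norm (expo \<rho>) (Gam_entry a \<rho>) k
              \<le> c * real k powr (- (1 + 3 * \<rho>) / 2))"

end

theory Submission
  imports Defs
begin

text \<open>If every entry of \<open>\<Gamma>\<^sub>k(1,\<rho>)\<close> satisfies \<open>\<bar>x\<^sub>i\<bar> \<le> C i\<^bsup>1-\<rho>\<^esup>\<close>, then
  \<open>\<bar>x\<^sub>i\<bar>\<^bsup>p\<^esup> \<le> C\<^bsup>p\<^esup> i\<^sup>2\<close> for \<open>p = 2/(1-\<rho>)\<close>, so the \<open>\<ell>\<^sub>p\<close> norm is at most
  \<open>C (\<Sum>\<^sub>i\<^sub>\<le>\<^sub>k i\<^sup>2)\<^bsup>(1-\<rho>)/2\<^esup> \<le> C (k(k+1)\<^sup>2/3)\<^bsup>(1-\<rho>)/2\<^esup>\<close>; combined with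
  \<open>\<gamma>\<^sub>k(1) \<le> D/(k(k+1))\<close> this gives the rate \<open>k\<^bsup>-(1+3\<rho>)/2\<^esup>\<close> with constant
  \<open>D C 3\<^bsup>-(1-\<rho>)/2\<^esup>\<close>. (For \<open>\<rho> = 1\<close> the norm is the maximum and the bound is just \<open>C\<close>.)
  For \<open>\<alpha>\<^sub>k = 2/(k+1)\<close> one has \<open>\<gamma>\<^sub>k(1) = 2/(k(k+1))\<close> and \<open>C = 2\<^sup>\<rho>\<close>.
  For the recursive choice \<open>\<gamma>\<^sub>k(1) = \<alpha>\<^sub>k\<^sup>2\<close>, so the entries are \<open>(1/\<alpha>\<^sub>i)\<^bsup>1-\<rho>\<^esup>\<close>, and the
  recursion \<open>\<alpha>\<^sub>k\<^sup>2 = (1-\<alpha>\<^sub>k) \<alpha>\<^sub>k\<^sub>-\<^sub>1\<^sup>2\<close> makes \<open>1/\<alpha>\<^sub>k\<close> grow by between \<open>1/2\<close> and \<open>1\<close>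
  per step, whence \<open>(k+1)/2 \<le> 1/\<alpha>\<^sub>k \<le> k\<close>; here \<open>D = 4\<close> and \<open>C = 1\<close>.\<close>

lemma sum_squares_le: "(\<Sum>i=1..k. (real i)\<^sup>2) \<le> real k * (real k + 1)\<^sup>2 / 3"
proof -
  have "(\<Sum>i=1..k. (real i)\<^sup>2) = real k * (real k + 1) * (2 * real k + 1) / 6"
    by (induction k) (auto simp: field_simps power2_eq_square)
  also have "\<dots> \<le> real k * (real k + 1) * (2 * (real k + 1)) / 6"
    by (intro divide_right_mono mult_left_mono) auto
  also have "\<dots> = real k * (real k + 1)\<^sup>2 / 3"
    by (simp add: power2_eq_square)
  finally show ?thesis .
qed

lemma sum_squares_powr_div_le:
  fixes k q :: real
  assumes "k > 0" "0 \<le> q" "q \<le> 1/2"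
  shows "(k * (k + 1)\<^sup>2 / 3) powr q / (k * (k + 1)) \<le> 3 powr (- q) * k powr (3 * q - 2)"
proof -
  have "(k + 1)\<^sup>2 = (k + 1) powr 2"
    using assms by (simp add: powr_numeral)
  then have "((k + 1)\<^sup>2) powr q = (k + 1) powr (2 * q)"
    by (simp add: powr_powr)
  moreover have "(k * (k + 1)\<^sup>2 / 3) powr q = k powr q * ((k + 1)\<^sup>2) powr q / 3 powr q"
    using assms by (simp add: powr_divide powr_mult)
  ultimately have "(k * (k + 1)\<^sup>2 / 3) powr q / (k * (k + 1))
      = 3 powr (- q) * (k powr q * (k + 1) powr (2 * q)) / (k * (k + 1))"
    by (simp add: powr_minus_divide)
  also have "\<dots> = 3 powr (- q) * (k powr (q - 1) * (k + 1) powr (2 * q - 1))"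
    using assms by (simp add: powr_diff)
  also have "\<dots> \<le> 3 powr (- q) * (k powr (q - 1) * k powr (2 * q - 1))"
  proof -
    have "(k + 1) powr (2 * q - 1) \<le> k powr (2 * q - 1)"
      using assms by (intro powr_mono2') auto
    then show ?thesis
      by (intro mult_left_mono) auto
  qed
  also have "k powr (q - 1) * k powr (2 * q - 1) = k powr (3 * q - 2)"
  proof -
    have "3 * q - 2 = (q - 1) + (2 * q - 1)"
      by simp
    then show ?thesis
      by (simp only: powr_add)
  qed
  finally show ?thesis .
qed

lemma lp_norm_expo_le:
  assumes "0 \<le> \<rho>" "\<rho> \<le> 1" "k \<ge> 1" "C \<ge> 0"
    and bound: "\<forall>i\<in>{1..k}. \<bar>x i\<bar> \<le> C * real i powr (1 - \<rho>)"
  shows "lp_norm (expo \<rho>) x k \<le> C * (real k * (real k + 1)\<^sup>2 / 3) powr ((1 - \<rho>) / 2)"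
proof (cases "\<rho> = 1")
  case True
  have "Max ((\<lambda>i. \<bar>x i\<bar>) ` {1..k}) \<le> C"
    using bound \<open>k \<ge> 1\<close> True by (subst Max_le_iff) auto
  then show ?thesis
    using True \<open>k \<ge> 1\<close> by (simp add: lp_norm_def expo_def)
next
  case False
  define p where "p = 2 / (1 - \<rho>)"
  define S where "S = real k * (real k + 1)\<^sup>2 / 3"
  have "\<rho> < 1"
    using False assms by simp
  then have "p > 0" "(1 - \<rho>) * p = 2" "p * ((1 - \<rho>) / 2) = 1"
    by (simp_all add: p_def field_simps)
  have entry_pow: "\<bar>x i\<bar> powr p \<le> C powr p * (real i)\<^sup>2" if "i \<in> {1..k}" for i
  proof -
    have "\<bar>x i\<bar> powr p \<le> (C * real i powr (1 - \<rho>)) powr p"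
      using bound that \<open>p > 0\<close> by (intro powr_mono2) auto
    also have "\<dots> = C powr p * real i powr ((1 - \<rho>) * p)"
      using \<open>C \<ge> 0\<close> by (simp add: powr_mult powr_powr)
    also have "\<dots> = C powr p * (real i)\<^sup>2"
      using that \<open>(1 - \<rho>) * p = 2\<close> by (simp add: powr_numeral)
    finally show ?thesis .
  qed
  have "(\<Sum>i=1..k. \<bar>x i\<bar> powr p) \<le> (\<Sum>i=1..k. C powr p * (real i)\<^sup>2)"
    using entry_pow by (rule sum_mono)
  also have "\<dots> \<le> C powr p * S"
    unfolding S_def sum_distrib_left[symmetric] by (intro mult_left_mono sum_squares_le) auto
  finally have "(\<Sum>i=1..k. \<bar>x i\<bar> powr p) powr ((1 - \<rho>) / 2) \<le> (C powr p * S) powr ((1 - \<rho>) / 2)"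
    using \<open>\<rho> < 1\<close> by (intro powr_mono2) (auto intro: sum_nonneg)
  also have "\<dots> = C * S powr ((1 - \<rho>) / 2)"
    using \<open>C \<ge> 0\<close> \<open>p * ((1 - \<rho>) / 2) = 1\<close> by (simp add: powr_mult powr_powr)
  finally show ?thesis
    using False by (simp add: lp_norm_def expo_def p_def S_def)
qed

lemma rate_cond_of_bounds:
  assumes "0 \<le> \<rho>" "\<rho> \<le> 1" "a 1 = 1" "C \<ge> 0"
    and gam_bound: "\<forall>k\<ge>1. 0 \<le> gam a k \<and> gam a k \<le> D / (real k * (real k + 1))"
    and entry_bound: "\<forall>i\<ge>1. \<bar>Gam_entry a \<rho> i\<bar> \<le> C * real i powr (1 - \<rho>)"
  shows "rate_cond a \<rho> (D * C * 3 powr (- (1 - \<rho>) / 2))"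
  unfolding rate_cond_def
proof (intro conjI allI impI)
  fix k :: nat
  assume "k \<ge> 1"
  define q where "q = (1 - \<rho>) / 2"
  define S where "S = real k * (real k + 1)\<^sup>2 / 3"
  have "0 \<le> q" "q \<le> 1/2"
    using assms by (simp_all add: q_def)
  have "gam a k * lp_norm (expo \<rho>) (Gam_entry a \<rho>) k \<le> gam a k * (C * S powr q)"
    using gam_bound entry_bound lp_norm_expo_le[OF assms(1,2) \<open>k \<ge> 1\<close> \<open>C \<ge> 0\<close>] \<open>k \<ge> 1\<close>
    unfolding S_def q_def by (intro mult_left_mono) auto
  also have "\<dots> \<le> D / (real k * (real k + 1)) * (C * S powr q)"
    using gam_bound \<open>k \<ge> 1\<close> \<open>C \<ge> 0\<close> by (intro mult_right_mono) auto
  also have "\<dots> = D * C * (S powr q / (real k * (real k + 1)))"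
    by simp
  also have "\<dots> \<le> D * C * (3 powr (- q) * real k powr (3 * q - 2))"
  proof (rule mult_left_mono)
    show "S powr q / (real k * (real k + 1)) \<le> 3 powr (- q) * real k powr (3 * q - 2)"
      unfolding S_def using \<open>k \<ge> 1\<close> \<open>0 \<le> q\<close> \<open>q \<le> 1/2\<close> by (intro sum_squares_powr_div_le) auto
    have "0 \<le> D / (real k * (real k + 1))" "real k * (real k + 1) > 0"
      using gam_bound \<open>k \<ge> 1\<close> by (auto intro: order_trans)
    then have "D \<ge> 0"
      by (simp add: zero_le_divide_iff)
    then show "0 \<le> D * C"
      using \<open>C \<ge> 0\<close> by simp
  qed
  also have "\<dots> = D * C * 3 powr (- (1 - \<rho>) / 2) * real k powr (- (1 + 3 * \<rho>) / 2)"
  proof -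
    have "- q = - (1 - \<rho>) / 2" "3 * q - 2 = - (1 + 3 * \<rho>) / 2"
      by (simp_all add: q_def field_simps)
    then show ?thesis
      by (simp only: mult.assoc)
  qed
  finally show "gam a k * lp_norm (expo \<rho>) (Gam_entry a \<rho>) k
      \<le> D * C * 3 powr (- (1 - \<rho>) / 2) * real k powr (- (1 + 3 * \<rho>) / 2)" .
qed (use assms in simp)

lemma gam_harmonic:
  assumes "\<forall>k\<ge>1. a k = 2 / (real k + 1)" "k \<ge> 1"
  shows "gam a k = 2 / (real k * (real k + 1))"
  using \<open>k \<ge> 1\<close>
proof (induction k rule: nat_induct_at_least)
  case (Suc k)
  then obtain n where "k = Suc n"
    by (cases k) auto
  moreover have "a (Suc k) = 2 / (real k + 2)"
    using assms by simp
  ultimately have "gam a (Suc k) = (1 - 2 / (real k + 2)) * (2 / (real k * (real k + 1)))"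
    using Suc.IH by simp
  also have "\<dots> = real k / (real k + 2) * (2 / (real k * (real k + 1)))"
    by (simp add: field_simps)
  also have "\<dots> = 2 / ((real k + 1) * (real k + 2))"
  proof -
    have "real k \<noteq> 0" "real k + 1 \<noteq> 0" "real k + 2 \<noteq> 0"
      using Suc.hyps by linarith+
    then show ?thesis
      by (simp add: divide_simps)
  qed
  finally show ?case
    by (simp add: add.commute)
qed simp

lemma Gam_entry_harmonic_le:
  assumes "\<forall>k\<ge>1. a k = 2 / (real k + 1)" "0 \<le> \<rho>" "i \<ge> 1"
  shows "\<bar>Gam_entry a \<rho> i\<bar> \<le> 2 powr \<rho> * real i powr (1 - \<rho>)"
proof -
  have a: "a i = 2 / (real i + 1)"
    using assms by simp
  have "Gam_entry a \<rho> i = a i powr \<rho> * (a i / gam a i)"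
    by (simp add: Gam_entry_def powr_add a)
  also have "a i / gam a i = real i"
    using gam_harmonic[OF assms(1,3)] \<open>i \<ge> 1\<close> by (simp add: a field_simps)
  finally have "\<bar>Gam_entry a \<rho> i\<bar> = (2 / (real i + 1)) powr \<rho> * real i"
    by (simp add: a)
  also have "\<dots> \<le> (2 / real i) powr \<rho> * real i"
    using assms by (intro mult_right_mono powr_mono2) (auto simp: frac_le)
  also have "\<dots> = 2 powr \<rho> * real i powr (1 - \<rho>)"
    using \<open>i \<ge> 1\<close> by (simp add: powr_divide powr_diff)
  finally show ?thesis .
qed

lemma harmonic_steps_rate:
  assumes "0 \<le> \<rho>" "\<rho> \<le> 1" "\<forall>k\<ge>1. a k = 2 / (real k + 1)"
  shows "(\<forall>k\<ge>1. 0 < a k \<and> a k \<le> 1) \<and> rate_cond a \<rho> (2 powr (1 + \<rho>) * 3 powr (- (1 - \<rho>) / 2))"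
proof
  show "\<forall>k\<ge>1. 0 < a k \<and> a k \<le> 1"
    using assms by simp
  have "rate_cond a \<rho> (2 * 2 powr \<rho> * 3 powr (- (1 - \<rho>) / 2))"
    using assms gam_harmonic[OF assms(3)] Gam_entry_harmonic_le[OF assms(3,1)]
    by (intro rate_cond_of_bounds) auto
  then show "rate_cond a \<rho> (2 powr (1 + \<rho>) * 3 powr (- (1 - \<rho>) / 2))"
    by (simp add: powr_add)
qed

lemma inverse_squared_step_bounds:
  fixes a b :: real
  assumes "a > 0" "b > 0" "a\<^sup>2 = (1 - a) * b\<^sup>2"
  shows "1 / b + 1 / 2 \<le> 1 / a \<and> 1 / a \<le> 1 / b + 1"
proof -
  define u where "u = 1 / a"
  define w where "w = 1 / b"
  have "u > 0" "w > 0"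
    using assms by (simp_all add: u_def w_def)
  have "w\<^sup>2 = u\<^sup>2 - u"
    using assms by (simp add: u_def w_def field_simps power2_eq_square)
  then have "u * (u - 1) = w\<^sup>2"
    by (simp add: power2_eq_square right_diff_distrib)
  then have "u * (u - 1) > 0"
    using \<open>w > 0\<close> by simp
  then have "u > 1"
    using \<open>u > 0\<close> by (simp add: zero_less_mult_iff)
  have "w\<^sup>2 \<le> (u - 1 / 2)\<^sup>2"
    using \<open>w\<^sup>2 = u\<^sup>2 - u\<close> by (simp add: power2_eq_square algebra_simps)
  then have "w \<le> u - 1 / 2"
    by (rule power2_le_imp_le) (use \<open>u > 1\<close> in simp)
  have "(u - 1)\<^sup>2 \<le> w\<^sup>2"
    using \<open>w\<^sup>2 = u\<^sup>2 - u\<close> \<open>u > 1\<close> by (simp add: power2_eq_square algebra_simps)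
  then have "u - 1 \<le> w"
    by (rule power2_le_imp_le) (use \<open>w > 0\<close> in simp)
  show ?thesis
    using \<open>w \<le> u - 1 / 2\<close> \<open>u - 1 \<le> w\<close> by (simp add: u_def w_def)
qed

lemma gam_squared_steps:
  assumes "a 1 = 1" "\<forall>k\<ge>2. 0 < a k \<and> (a k)\<^sup>2 = (1 - a k) * gam a (k - 1)" "k \<ge> 1"
  shows "gam a k = (a k)\<^sup>2"
proof (cases "k = 1")
  case False
  then obtain n where "k = Suc (Suc n)"
    using \<open>k \<ge> 1\<close> by (metis One_nat_def Suc_le_D not0_implies_Suc)
  then show ?thesis
    using assms(2) by auto
qed (use assms in simp)

lemma inverse_squared_steps_bounds:
  assumes "a 1 = 1" "\<forall>k\<ge>2. 0 < a k \<and> (a k)\<^sup>2 = (1 - a k) * gam a (k - 1)" "k \<ge> 1"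
  shows "0 < a k \<and> (real k + 1) / 2 \<le> 1 / a k \<and> 1 / a k \<le> real k"
  using \<open>k \<ge> 1\<close>
proof (induction k rule: nat_induct_at_least)
  case (Suc k)
  have "0 < a (Suc k)" "(a (Suc k))\<^sup>2 = (1 - a (Suc k)) * (a k)\<^sup>2"
    using assms(2) gam_squared_steps[OF assms(1,2) Suc.hyps] Suc.hyps by auto
  then have "1 / a k + 1 / 2 \<le> 1 / a (Suc k) \<and> 1 / a (Suc k) \<le> 1 / a k + 1"
    using Suc.IH by (intro inverse_squared_step_bounds) auto
  then show ?case
    using Suc.IH \<open>0 < a (Suc k)\<close> by auto
qed (use assms in simp)

lemma squared_steps_rate:
  assumes "0 \<le> \<rho>" "\<rho> \<le> 1" "a 1 = 1"
    and step: "\<forall>k\<ge>2. 0 < a k \<and> (a k)\<^sup>2 = (1 - a k) * gam a (k - 1)"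
  shows "(\<forall>k\<ge>1. 0 < a k \<and> a k \<le> 1) \<and> rate_cond a \<rho> (4 / 3 powr ((1 - \<rho>) / 2))"
proof
  note bounds = inverse_squared_steps_bounds[OF assms(3) step]
  show "\<forall>k\<ge>1. 0 < a k \<and> a k \<le> 1"
  proof (intro allI impI)
    fix k :: nat
    assume "k \<ge> 1"
    then have "0 < a k" "(real k + 1) / 2 \<le> 1 / a k" "1 \<le> (real k + 1) / 2"
      using bounds[of k] by auto
    then have "1 \<le> 1 / a k"
      by (blast intro: order_trans)
    then show "0 < a k \<and> a k \<le> 1"
      using \<open>0 < a k\<close> by (simp add: field_simps)
  qed
  have "0 \<le> gam a k \<and> gam a k \<le> 4 / (real k * (real k + 1))" if "k \<ge> 1" for k
  proof -
    have "0 < a k" "a k \<le> 2 / (real k + 1)"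
      using bounds[OF that] by (auto simp: field_simps)
    then have "(a k)\<^sup>2 \<le> 4 / (real k + 1)\<^sup>2"
      using power_mono[of "a k" "2 / (real k + 1)" 2] by (simp add: power_divide)
    also have "\<dots> \<le> 4 / (real k * (real k + 1))"
      using that by (intro divide_left_mono) (auto simp: power2_eq_square)
    finally show ?thesis
      using gam_squared_steps[OF assms(3) step that] by simp
  qed
  moreover have "\<bar>Gam_entry a \<rho> i\<bar> \<le> 1 * real i powr (1 - \<rho>)" if "i \<ge> 1" for i
  proof -
    have "0 < a i" "1 / a i \<le> real i"
      using bounds[OF that] by auto
    have "(a i)\<^sup>2 = a i powr 2"
      using \<open>0 < a i\<close> by (simp add: powr_numeral)
    then have "Gam_entry a \<rho> i = a i powr (1 + \<rho>) / a i powr 2"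
      using gam_squared_steps[OF assms(3) step that] by (simp add: Gam_entry_def)
    also have "\<dots> = a i powr (- (1 - \<rho>))"
      by (simp add: powr_diff[symmetric])
    also have "\<dots> = (1 / a i) powr (1 - \<rho>)"
      unfolding powr_minus_divide using \<open>0 < a i\<close> by (simp add: powr_divide)
    finally show ?thesis
      using \<open>1 / a i \<le> real i\<close> \<open>0 < a i\<close> assms by (simp add: powr_mono2)
  qed
  ultimately have "rate_cond a \<rho> (4 * 1 * 3 powr (- (1 - \<rho>) / 2))"
    using assms by (intro rate_cond_of_bounds) auto
  moreover have "3 powr (- (1 - \<rho>) / 2) = 1 / 3 powr ((1 - \<rho>) / 2)"
    unfolding minus_divide_left[symmetric] powr_minus_divide ..
  ultimately show "rate_cond a \<rho> (4 / 3 powr ((1 - \<rho>) / 2))"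
    by simp
qed

theorem proposition3p4:
  fixes \<rho> :: real
  assumes "0 \<le> \<rho>" and "\<rho> \<le> 1"
  shows "(\<forall>a :: nat \<Rightarrow> real. (\<forall>k\<ge>1. a k = 2 / (real k + 1)) \<longrightarrow>
            (\<forall>k\<ge>1. 0 < a k \<and> a k \<le> 1) \<and>
            rate_cond a \<rho> (2 powr (1 + \<rho>) * 3 powr (- (1 - \<rho>) / 2)))
       \<and> (\<forall>a :: nat \<Rightarrow> real. a 1 = 1 \<and>
            (\<forall>k\<ge>2. 0 < a k \<and> (a k)\<^sup>2 = (1 - a k) * gam a (k - 1)) \<longrightarrow>
            (\<forall>k\<ge>1. 0 < a k \<and> a k \<le> 1) \<and>
            rate_cond a \<rho> (4 / 3 powr ((1 - \<rho>) / 2)))"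
  using harmonic_steps_rate[OF assms] squared_steps_rate[OF assms] by blast

end
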